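(* Let $D_n$, colored towers and bottoms be as in the context. For all integers $n,m,r\ge 0$ there is a bijection $$((\mathcal{T}^s,\mathcal{B}^w),(m,r),D_n)\simeq ((\mathcal{T}^s,\mathcal{T}^w),(m,r),D_{n-r}).$$
   Context: A Dyck path of length $2n$ is a lattice path from $(0,0)$ to $(2n,0)$ with steps $U=(1,1)$ and $D=(1,-1)$ never going below the $x$-axis. An elevated Dyck path is a path $U\bar pD$ with $\bar p$ a Dyck path; $D_n$ denotes the set of elevated Dyck paths of length $2n+2$. For a path $p$ (a word in $U,D$), a tower is an occurrence of a factor $t=U^iD^i$ ($i\ge1$) that cannot be extended to an occurrence of $UtD$; equivalently, each peak $UD$ determines exactly one tower, the maximal $U^iD^i$ centered at it. Towers are colored as follows: Step 1: color every tower whose first step is immediately preceded by a $U$-step; Step 2: color every tower whose first step immediately follows the last step of a tower left uncolored after Step 1; a tower beginning at the first step of $p$ is also colored. $\mathcal{T}(p)$ is the set of colored towers and $\mathcal{T}_2(p)\subseteq\mathcal{T}(p)$ those of height $i\ge2$. The bottom of a tower in $\mathcal{T}_2(p)$ is its first $U$-step. $((\mathcal{T}^s,\mathcal{B}^w),(m,r),D_n)$ is the set of triples $(p,S,R)$ with $p\in D_n$, $S\subseteq\mathcal{T}(p)$, $|S|=m$, $R\subseteq S\cap\mathcal{T}_2(p)$, $|R|=r$ (paths with $m$ colored towers labeled $s$, among which exactly $r$ have their bottom labeled $w$). $((\mathcal{T}^s,\mathcal{T}^w),(m,r),D_n)$ is the set of triples $(p,S,R)$ with $p\in D_n$, $S\subseteq\mathcal{T}(p)$,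 $|S|=m$, $R\subseteq S$, $|R|=r$. $A\simeq B$ means there is a bijection between $A$ and $B$ (both sets empty if the index of $D$ is negative). *)

theory Defs
  imports Main
begin

text \<open>Paths are words over {U,D}, encoded as bool lists: True = U, False = D.
  Positions are 0-based.  A tower occurrence is encoded as (s, i): it starts at
  position s and is the factor U^i D^i occupying positions s .. s+2i-1.\<close>

type_synonym path = "bool list"

definition height :: "path \<Rightarrow> int" where
  "height w = (\<Sum>x\<leftarrow>w. if x then 1 else -1)"

definition dyck :: "path \<Rightarrow> bool" where
  "dyck p \<longleftrightarrow> (\<forall>k\<le>length p. height (take k p) \<ge> 0) \<and> height p = 0"

definition elevated :: "path \<Rightarrow> bool" where
  "elevated p \<longleftrightarrow> (\<exists>q. dyck q \<and> p = True # q @ [False])"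

definition Dn :: "int \<Rightarrow> path set" where
  "Dn k = {p. k \<ge> 0 \<and> elevated p \<and> length p = 2 * nat k + 2}"

definition occ :: "path \<Rightarrow> nat \<Rightarrow> nat \<Rightarrow> bool" where
  "occ p s i \<longleftrightarrow> i \<ge> 1 \<and> s + 2 * i \<le> length p \<and>
     (\<forall>j<i. p ! (s + j) = True) \<and> (\<forall>j<i. p ! (s + i + j) = False)"

text \<open>Towers: occurrences that cannot be extended to an occurrence of U t D.\<close>
definition towers :: "path \<Rightarrow> (nat \<times> nat) set" where
  "towers p = {(s, i). occ p s i \<and>
     \<not> (s > 0 \<and> s + 2 * i < length p \<and> p ! (s - 1) = True \<and> p ! (s + 2 * i) = False)}"

definition colored1 :: "path \<Rightarrow> (nat \<times> nat) set" where
  "colored1 p = {(s, i) \<in> towers p. s > 0 \<and> p ! (s - 1) = True}"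

text \<open>Colored towers: Step 1, Step 2 (immediately following the last step of a tower
  left uncolored after Step 1), and a tower beginning at the first step of p.\<close>
definition colored :: "path \<Rightarrow> (nat \<times> nat) set" where
  "colored p = colored1 p \<union>
     {(s, i) \<in> towers p. \<exists>(s', i') \<in> towers p - colored1 p. s' + 2 * i' = s} \<union>
     {(s, i) \<in> towers p. s = 0}"

definition colored2 :: "path \<Rightarrow> (nat \<times> nat) set" where
  "colored2 p = {(s, i) \<in> colored p. i \<ge> 2}"

text \<open>((T^s, B^w), (m, r), D_k): a tower in R stands for its bottom being labeled w.\<close>
definition TsBw :: "nat \<Rightarrow> nat \<Rightarrow> int \<Rightarrow> (path \<times> (nat \<times> nat) set \<times> (nat \<times> nat) set) set" where
  "TsBw m r k = {(p, S, R). p \<in> Dn k \<and> S \<subseteq> colored p \<and> card S = m \<and>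
      R \<subseteq> S \<inter> colored2 p \<and> card R = r}"

definition TsTw :: "nat \<Rightarrow> nat \<Rightarrow> int \<Rightarrow> (path \<times> (nat \<times> nat) set \<times> (nat \<times> nat) set) set" where
  "TsTw m r k = {(p, S, R). p \<in> Dn k \<and> S \<subseteq> colored p \<and> card S = m \<and>
      R \<subseteq> S \<and> card R = r}"

end

theory Submission
  imports Defs
begin

text \<open>Call a configuration a path together with a set S of colored towers and two disjoint
  subsets of S: a set R of towers of height at least 2 whose bottom is labelled w, and a set Q of
  towers labelled w as a whole, every tower of Q lying to the left of every tower of R. Removing
  one UD-pair from the leftmost tower of R (height i to i - 1) and moving it to Q lowers the
  semilength by one; the towers stay towers and keep their colors, since resizing a tower only
  shifts the towers behind it and preserves the steps next to every tower. Growing the rightmost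
  tower of Q and moving it back to R is the inverse. Doing this r times turns the r labelled bottoms
  into r labelled towers.\<close>

section \<open>Towers\<close>

lemma occ_height_unique:
  assumes "occ p s i" "occ p s i'"
  shows "i = i'"
proof (rule ccontr)
  assume "i \<noteq> i'"
  then consider "i < i'" | "i' < i" by linarith
  then show False
  proof cases
    case 1
    have "\<not> p ! (s + i + 0)" using assms(1) unfolding occ_def by auto
    moreover have "p ! (s + i)" using assms(2) 1 unfolding occ_def by auto
    ultimately show False by simp
  next
    case 2
    have "\<not> p ! (s + i' + 0)" using assms(2) unfolding occ_def by auto
    moreover have "p ! (s + i')" using assms(1) 2 unfolding occ_def by auto
    ultimately show False by simp
  qed
qed

lemma towersI:
  assumes "1 \<le> k" "s + 2*k \<le> length p"
    and "\<And>d. d < k \<Longrightarrow> p ! (s + d)"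
    and "\<And>d. d < k \<Longrightarrow> \<not> p ! (s + k + d)"
    and "0 < s \<Longrightarrow> s + 2*k < length p \<Longrightarrow> p ! (s - 1) \<Longrightarrow> p ! (s + 2*k)"
  shows "(s, k) \<in> towers p"
  using assms unfolding towers_def occ_def by auto

lemma towersD:
  assumes "(s, k) \<in> towers p"
  shows "1 \<le> k" "s + 2*k \<le> length p"
    and "\<And>d. d < k \<Longrightarrow> p ! (s + d)"
    and "\<And>d. d < k \<Longrightarrow> \<not> p ! (s + k + d)"
    and "0 < s \<Longrightarrow> s + 2*k < length p \<Longrightarrow> p ! (s - 1) \<Longrightarrow> p ! (s + 2*k)"
  using assms unfolding towers_def occ_def by auto

lemma towers_up_down:
  assumes "(s, k) \<in> towers p"
  shows "\<And>x. s \<le> x \<Longrightarrow> x < s + k \<Longrightarrow> p ! x"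
    and "\<And>x. s + k \<le> x \<Longrightarrow> x < s + 2*k \<Longrightarrow> \<not> p ! x"
proof -
  fix x assume "s \<le> x" "x < s + k"
  then show "p ! x" using towersD(3)[OF assms, of "x - s"] by simp
next
  fix x assume "s + k \<le> x" "x < s + 2*k"
  then show "\<not> p ! x" using towersD(4)[OF assms, of "x - s - k"] by simp
qed

text \<open>Two distinct towers never overlap: an overlap forces the two peaks to coincide, and then
  the lower tower could be extended by one step on each side.\<close>
lemma towers_disjoint:
  assumes a: "(a, i) \<in> towers p" and s: "(s, k) \<in> towers p" and "s < a"
  shows "s + 2*k \<le> a"
proof (rule ccontr)
  assume overlap: "\<not> s + 2*k \<le> a"
  note Ua = towers_up_down(1)[OF a] and Da = towers_up_down(2)[OF a]
  note Us = towers_up_down(1)[OF s] and Ds = towers_up_down(2)[OF s]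
  have "1 \<le> i" "1 \<le> k" "s + 2*k \<le> length p" using towersD a s by auto
  have "\<not> s + k \<le> a" using Ds[of a] Ua[of a] overlap \<open>1 \<le> i\<close> by auto
  moreover have "\<not> s + k < a + i" using Ds[of "s + k"] Ua[of "s + k"] \<open>1 \<le> k\<close> calculation by auto
  moreover have "\<not> a + i < s + k" using Us[of "a + i"] Da[of "a + i"] \<open>s < a\<close> \<open>1 \<le> i\<close> by auto
  ultimately have "s + k = a + i" by linarith
  then have "0 < a \<and> a + 2*i < length p \<and> p ! (a - 1) \<and> \<not> p ! (a + 2*i)"
    using Us[of "a - 1"] Ds[of "a + 2*i"] \<open>s < a\<close> \<open>1 \<le> i\<close> \<open>s + 2*k \<le> length p\<close> by auto
  with towersD(5)[OF a] show False by blast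
qed

lemma towers_fst_inj: "t \<in> towers p \<Longrightarrow> t' \<in> towers p \<Longrightarrow> fst t = fst t' \<Longrightarrow> t = t'"
  using occ_height_unique unfolding towers_def by (cases t, cases t') auto

lemma finite_towers: "finite (towers p)"
proof -
  have "towers p \<subseteq> {..length p} \<times> {..length p}" using towersD by fastforce
  then show ?thesis by (rule finite_subset) auto
qed

section \<open>Resizing a tower\<close>

definition resize :: "path \<Rightarrow> nat \<Rightarrow> nat \<Rightarrow> nat \<Rightarrow> path" where
  "resize p a i j = take a p @ replicate j True @ replicate j False @ drop (a + 2*i) p"

text \<open>The truncated subtraction is harmless: shift_pos is only applied to positions outside the
  resized tower.\<close>
definition shift_pos :: "nat \<Rightarrow> nat \<Rightarrow> nat \<Rightarrow> nat \<Rightarrow> nat" where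
  "shift_pos a i j x = (if x \<le> a then x else x + 2*j - 2*i)"

definition shift_tower :: "nat \<Rightarrow> nat \<Rightarrow> nat \<Rightarrow> nat \<times> nat \<Rightarrow> nat \<times> nat" where
  "shift_tower a i j t = (shift_pos a i j (fst t), if fst t = a then j else snd t)"

lemma length_resize: "a + 2*i \<le> length p \<Longrightarrow> length (resize p a i j) = length p + 2*j - 2*i"
  unfolding resize_def by auto

lemma resize_resize: "a + 2*i \<le> length p \<Longrightarrow> resize (resize p a i j) a j k = resize p a i k"
  unfolding resize_def by auto

lemma nth_resize_up: "a + 2*i \<le> length p \<Longrightarrow> a \<le> x \<Longrightarrow> x < a + j \<Longrightarrow> resize p a i j ! x"
  unfolding resize_def by (auto simp: nth_append)

lemma nth_resize_down:
  "a + 2*i \<le> length p \<Longrightarrow> a + j \<le> x \<Longrightarrow> x < a + 2*j \<Longrightarrow> \<not> resize p a i j ! x"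
  unfolding resize_def by (auto simp: nth_append)

lemma nth_resize_outside:
  assumes "1 \<le> i" "a + 2*i \<le> length p" "x < length p" "x < a \<or> a + 2*i \<le> x"
  shows "resize p a i j ! shift_pos a i j x = p ! x"
proof (cases "x < a")
  case False
  then have "shift_pos a i j x = a + 2*j + (x - (a + 2*i))"
    using assms unfolding shift_pos_def by auto
  moreover have "a + 2*i + (x - (a + 2*i)) = x" using False assms by auto
  ultimately
  show ?thesis using assms unfolding resize_def by (auto simp: nth_append min_def)
qed (use assms in \<open>auto simp: resize_def shift_pos_def nth_append\<close>)

lemma nth_resize_shift:
  assumes a: "(a, i) \<in> towers p" and "1 \<le> j" "x < length p" "x \<le> a \<or> a + 2*i - 1 \<le> x"
  shows "resize p a i j ! shift_pos a i j x = p ! x"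
proof -
  have "1 \<le> i" "a + 2*i \<le> length p" using towersD[OF a] by auto
  consider "x < a \<or> a + 2*i \<le> x" | "x = a" | "x = a + 2*i - 1" using assms by linarith
  then show ?thesis
  proof cases
    case 1
    then show ?thesis using nth_resize_outside assms \<open>1 \<le> i\<close> \<open>a + 2*i \<le> length p\<close> by blast
  next
    case 2
    then show ?thesis using nth_resize_up towers_up_down(1)[OF a] \<open>1 \<le> i\<close> \<open>1 \<le> j\<close>
        \<open>a + 2*i \<le> length p\<close> by (auto simp: shift_pos_def)
  next
    case 3
    then have "shift_pos a i j x = a + 2*j - 1" using \<open>1 \<le> i\<close> by (auto simp: shift_pos_def)
    then show ?thesis using 3 nth_resize_down towers_up_down(2)[OF a] \<open>1 \<le> i\<close> \<open>1 \<le> j\<close>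
        \<open>a + 2*i \<le> length p\<close> by auto
  qed
qed

lemma resize_same:
  assumes a: "(a, i) \<in> towers p"
  shows "resize p a i i = p"
proof (rule nth_equalityI)
  have i: "1 \<le> i" and l: "a + 2*i \<le> length p" using towersD[OF a] by auto
  then show len: "length (resize p a i i) = length p" by (simp add: length_resize)
  fix x assume "x < length (resize p a i i)"
  then have "x < length p" using len by simp
  consider "x < a \<or> a + 2*i \<le> x" | "a \<le> x" "x < a + i" | "a + i \<le> x" "x < a + 2*i" by linarith
  then show "resize p a i i ! x = p ! x"
  proof cases
    case 1
    then show ?thesis using nth_resize_outside[OF i l \<open>x < length p\<close>, of i] i
      by (auto simp: shift_pos_def split: if_splits)
  qed (use nth_resize_up nth_resize_down towers_up_down[OF a] l in auto)
qed

lemma nth_resize_before_shift: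
  assumes a: "(a, i) \<in> towers p" and j: "1 \<le> j" and x: "0 < x" "x \<le> length p" "x \<le> a \<or> a + 2*i \<le> x"
  shows "0 < shift_pos a i j x \<and> resize p a i j ! (shift_pos a i j x - 1) = p ! (x - 1)"
proof -
  have "1 \<le> i" using towersD(1)[OF a] .
  then have "shift_pos a i j (x - 1) = shift_pos a i j x - 1" "x - 1 \<le> a \<or> a + 2*i - 1 \<le> x - 1"
    and "0 < shift_pos a i j x"
    using x j unfolding shift_pos_def by auto
  then show ?thesis using nth_resize_shift[OF a j, of "x - 1"] x by auto
qed

lemma towers_relative_position:
  assumes a: "(a, i) \<in> towers p" and s: "(s, k) \<in> towers p"
  obtains "s + 2*k \<le> a" | "s = a" "k = i" | "a + 2*i \<le> s"
proof -
  consider "s < a" | "s = a" | "a < s" by linarith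
  then show thesis
    using towers_disjoint[OF a s] towers_disjoint[OF s a] towers_fst_inj[OF a s] that by cases auto
qed

lemma shift_tower_outside:
  assumes a: "(a, i) \<in> towers p" and s: "(s, k) \<in> towers p" and "s \<noteq> a" and j: "1 \<le> j"
  shows "(shift_pos a i j s, k) \<in> towers (resize p a i j)"
proof -
  define s' where "s' = shift_pos a i j s"
  have i: "1 \<le> i" and la: "a + 2*i \<le> length p" and k: "1 \<le> k" and ls: "s + 2*k \<le> length p"
    using towersD a s by auto
  have side: "s + 2*k \<le> a \<or> a + 2*i \<le> s"
    using towers_relative_position[OF a s] \<open>s \<noteq> a\<close> by metis
  have shift: "shift_pos a i j (s + d) = s' + d" if "d \<le> 2*k" for d
    using side that i k unfolding s'_def shift_pos_def by auto
  have keep: "resize p a i j ! shift_pos a i j x = p ! x" if "s \<le> x" "x \<le> s + 2*k" "x < length p" for x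
  proof -
    have "x \<le> a \<or> a + 2*i - 1 \<le> x" using side that by linarith
    then show ?thesis using nth_resize_shift[OF a j that(3)] by blast
  qed
  have len: "length (resize p a i j) = length p + 2*j - 2*i" using length_resize[OF la] .
  have ends: "s' + 2*k \<le> length (resize p a i j)"
    and ends_strict: "s' + 2*k < length (resize p a i j) \<Longrightarrow> s + 2*k < length p"
    using side len la ls i j unfolding s'_def shift_pos_def by auto
  show ?thesis
    unfolding s'_def[symmetric]
  proof (rule towersI[OF k ends])
    fix d assume "d < k"
    then show "resize p a i j ! (s' + d)"
      using keep[of "s + d"] shift[of d] towersD(3)[OF s] ls by auto
  next
    fix d assume "d < k"
    then show "\<not> resize p a i j ! (s' + k + d)"
      using keep[of "s + k + d"] shift[of "k + d"] towersD(4)[OF s] ls by (auto simp: add.assoc)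
  next
    assume "0 < s'" "s' + 2*k < length (resize p a i j)" "resize p a i j ! (s' - 1)"
    moreover have "0 < s" using \<open>0 < s'\<close> side i unfolding s'_def shift_pos_def by auto
    ultimately have "p ! (s + 2*k)"
      using towersD(5)[OF s] ends_strict nth_resize_before_shift[OF a j, of s] side ls k
      unfolding s'_def by auto
    then show "resize p a i j ! (s' + 2*k)"
      using keep[of "s + 2*k"] shift[of "2*k"] ends_strict \<open>s' + 2*k < _\<close> by auto
  qed
qed

lemma resized_tower_in_towers:
  assumes a: "(a, i) \<in> towers p" and j: "1 \<le> j"
  shows "(a, j) \<in> towers (resize p a i j)"
proof (rule towersI[OF j])
  have i: "1 \<le> i" and la: "a + 2*i \<le> length p" using towersD a by auto
  note len = length_resize[OF la]
  show "a + 2*j \<le> length (resize p a i j)" using len la by auto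
  show "resize p a i j ! (a + d)" if "d < j" for d using nth_resize_up[OF la] that by auto
  show "\<not> resize p a i j ! (a + j + d)" if "d < j" for d using nth_resize_down[OF la] that by auto
  assume "0 < a" "a + 2*j < length (resize p a i j)" "resize p a i j ! (a - 1)"
  then have "p ! (a + 2*i)"
    using towersD(5)[OF a] nth_resize_shift[OF a j, of "a - 1"] len la
    by (auto simp: shift_pos_def)
  then show "resize p a i j ! (a + 2*j)"
    using nth_resize_shift[OF a j, of "a + 2*i"] \<open>a + 2*j < _\<close> len i
    by (auto simp: shift_pos_def)
qed

lemma shift_tower_in_towers:
  assumes a: "(a, i) \<in> towers p" and j: "1 \<le> j" and t: "t \<in> towers p"
  shows "shift_tower a i j t \<in> towers (resize p a i j)"
proof (cases "fst t = a")
  case True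
  then show ?thesis
    using resized_tower_in_towers[OF a j] by (simp add: shift_tower_def shift_pos_def)
next
  case False
  then show ?thesis
    using shift_tower_outside[OF a _ False j, of "snd t"] t by (simp add: shift_tower_def)
qed

lemma shift_tower_inverse:
  assumes a: "(a, i) \<in> towers p" and j: "1 \<le> j" and t: "t \<in> towers p"
  shows "shift_tower a j i (shift_tower a i j t) = t"
proof -
  obtain s k where [simp]: "t = (s, k)" by force
  have "1 \<le> i" "1 \<le> k" using towersD a t by auto
  with towers_relative_position[OF a t[simplified]] j show ?thesis
    by cases (auto simp: shift_tower_def shift_pos_def)
qed

lemma inj_on_shift_tower:
  "(a, i) \<in> towers p \<Longrightarrow> 1 \<le> j \<Longrightarrow> inj_on (shift_tower a i j) (towers p)"
  by (metis inj_onI shift_tower_inverse)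

lemma towers_resize:
  assumes a: "(a, i) \<in> towers p" and j: "1 \<le> j"
  shows "towers (resize p a i j) = shift_tower a i j ` towers p"
proof
  show "shift_tower a i j ` towers p \<subseteq> towers (resize p a i j)"
    using shift_tower_in_towers[OF a j] by auto
  have undo: "resize (resize p a i j) a j i = p"
    using resize_resize resize_same[OF a] towersD(2)[OF a] by metis
  have aj: "(a, j) \<in> towers (resize p a i j)" using resized_tower_in_towers[OF a j] .
  have "1 \<le> i" using towersD(1)[OF a] .
  show "towers (resize p a i j) \<subseteq> shift_tower a i j ` towers p"
  proof
    fix t assume t: "t \<in> towers (resize p a i j)"
    then have "shift_tower a j i t \<in> towers p" using shift_tower_in_towers[OF aj \<open>1 \<le> i\<close>] undo by metis
    moreover have "t = shift_tower a i j (shift_tower a j i t)"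
      using shift_tower_inverse[OF aj \<open>1 \<le> i\<close> t] by simp
    ultimately show "t \<in> shift_tower a i j ` towers p" by blast
  qed
qed

section \<open>Colors of a resized path\<close>

lemma colored1_iff: "t \<in> colored1 p \<longleftrightarrow> t \<in> towers p \<and> 0 < fst t \<and> p ! (fst t - 1)"
  unfolding colored1_def by (cases t) force

lemma colored_iff: "t \<in> colored p \<longleftrightarrow> t \<in> towers p \<and>
   (t \<in> colored1 p \<or> (\<exists>u \<in> towers p - colored1 p. fst u + 2 * snd u = fst t) \<or> fst t = 0)"
  unfolding colored_def colored1_def by (cases t) force

lemma colored2_iff: "t \<in> colored2 p \<longleftrightarrow> t \<in> colored p \<and> 2 \<le> snd t"
  unfolding colored2_def by (cases t) auto

lemma colored_subset_towers: "colored p \<subseteq> towers p"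
  using colored_iff by blast

lemma finite_colored: "finite (colored p)"
  using finite_subset[OF colored_subset_towers finite_towers] .

lemma towers_ends_outside:
  assumes "(a, i) \<in> towers p" "t \<in> towers p"
  shows "fst t \<le> a \<or> a + 2*i \<le> fst t"
    and "fst t + 2 * snd t \<le> a \<or> a + 2*i \<le> fst t + 2 * snd t"
proof -
  obtain s k where t: "t = (s, k)" by force
  from towers_relative_position[OF assms(1) assms(2)[unfolded t]]
  show "fst t \<le> a \<or> a + 2*i \<le> fst t" "fst t + 2 * snd t \<le> a \<or> a + 2*i \<le> fst t + 2 * snd t"
    by (cases; simp add: t)+
qed

lemma shift_pos_strict_mono:
  assumes "1 \<le> i" "1 \<le> j" "x \<le> a \<or> a + 2*i \<le> x" "y \<le> a \<or> a + 2*i \<le> y" "x < y"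
  shows "shift_pos a i j x < shift_pos a i j y"
  using assms unfolding shift_pos_def by auto

lemma shift_pos_inj:
  assumes "1 \<le> i" "1 \<le> j" "x \<le> a \<or> a + 2*i \<le> x" "y \<le> a \<or> a + 2*i \<le> y"
    and "shift_pos a i j x = shift_pos a i j y"
  shows "x = y"
  using shift_pos_strict_mono[OF assms(1-4)] shift_pos_strict_mono[OF assms(1,2,4,3)] assms(5)
  by (metis linorder_neqE_nat less_irrefl)

context
  fixes p :: path and a i j :: nat
  assumes tower: "(a, i) \<in> towers p" and j: "1 \<le> j"
begin

lemma fst_shift_tower_eq_0_iff: "t \<in> towers p \<Longrightarrow> fst (shift_tower a i j t) = 0 \<longleftrightarrow> fst t = 0"
  using towers_ends_outside(1)[OF tower] towersD(1)[OF tower] j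
  unfolding shift_tower_def shift_pos_def by fastforce

lemma fst_shift_tower_less:
  assumes "t \<in> towers p" "u \<in> towers p" "fst u < fst t"
  shows "fst (shift_tower a i j u) < fst (shift_tower a i j t)"
  using shift_pos_strict_mono[OF towersD(1)[OF tower] j] towers_ends_outside(1)[OF tower] assms
  by (simp add: shift_tower_def)

lemma shift_tower_end:
  assumes t: "t \<in> towers p"
  shows "fst (shift_tower a i j t) + 2 * snd (shift_tower a i j t) = shift_pos a i j (fst t + 2 * snd t)"
proof -
  obtain s k where [simp]: "t = (s, k)" by force
  have "1 \<le> i" "1 \<le> k" using towersD tower t by auto
  with towers_relative_position[OF tower t[simplified]] show ?thesis
    by cases (auto simp: shift_tower_def shift_pos_def)
qed

lemma colored1_resize_iff:
  assumes t: "t \<in> towers p"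
  shows "shift_tower a i j t \<in> colored1 (resize p a i j) \<longleftrightarrow> t \<in> colored1 p"
proof -
  have "shift_tower a i j t \<in> towers (resize p a i j)" using shift_tower_in_towers[OF tower j t] .
  moreover have "0 < fst t \<Longrightarrow> resize p a i j ! (fst (shift_tower a i j t) - 1) = p ! (fst t - 1)"
    using nth_resize_before_shift[OF tower j, of "fst t"] towers_ends_outside(1)[OF tower t]
      towersD(1,2)[of "fst t" "snd t" p] t
    by (auto simp: shift_tower_def)
  ultimately show ?thesis using t fst_shift_tower_eq_0_iff[OF t] unfolding colored1_iff by auto
qed

lemma colored_resize_iff:
  assumes t: "t \<in> towers p"
  shows "shift_tower a i j t \<in> colored (resize p a i j) \<longleftrightarrow> t \<in> colored p"
proof -
  let ?h = "shift_tower a i j" and ?p' = "resize p a i j"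
  have i: "1 \<le> i" using towersD(1)[OF tower] .
  have towers': "towers ?p' = ?h ` towers p" using towers_resize[OF tower j] .
  have follows: "fst (?h u) + 2 * snd (?h u) = fst (?h t) \<longleftrightarrow> fst u + 2 * snd u = fst t"
    if u: "u \<in> towers p" for u
  proof -
    have "fst (?h t) = shift_pos a i j (fst t)" by (simp add: shift_tower_def)
    then show ?thesis
      using shift_tower_end[OF u] shift_pos_inj[OF i j] towers_ends_outside[OF tower u]
        towers_ends_outside(1)[OF tower t] by metis
  qed
  have "(\<exists>u \<in> towers ?p' - colored1 ?p'. fst u + 2 * snd u = fst (?h t))
      \<longleftrightarrow> (\<exists>u \<in> towers p - colored1 p. fst u + 2 * snd u = fst t)"
  proof -
    have "(\<exists>u \<in> towers ?p' - colored1 ?p'. fst u + 2 * snd u = fst (?h t))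
        \<longleftrightarrow> (\<exists>u \<in> towers p. ?h u \<notin> colored1 ?p' \<and> fst (?h u) + 2 * snd (?h u) = fst (?h t))"
      unfolding towers' by blast
    also have "\<dots> \<longleftrightarrow> (\<exists>u \<in> towers p. u \<notin> colored1 p \<and> fst u + 2 * snd u = fst t)"
      using follows colored1_resize_iff by (intro bex_cong) auto
    finally show ?thesis by blast
  qed
  then show ?thesis
    unfolding colored_iff[of "?h t"] colored_iff[of t]
    using fst_shift_tower_eq_0_iff[OF t] t shift_tower_in_towers[OF tower j t] colored1_resize_iff[OF t]
    by simp
qed

lemma colored_resize: "colored (resize p a i j) = shift_tower a i j ` colored p"
proof (intro equalityI subsetI)
  fix u assume u: "u \<in> colored (resize p a i j)"
  then obtain t where t: "t \<in> towers p" "u = shift_tower a i j t"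
    using colored_subset_towers towers_resize[OF tower j] by blast
  then have "t \<in> colored p" using colored_resize_iff[OF t(1)] u by simp
  then show "u \<in> shift_tower a i j ` colored p" using t(2) by simp
next
  fix u assume "u \<in> shift_tower a i j ` colored p"
  then obtain t where t: "t \<in> colored p" "u = shift_tower a i j t" by blast
  moreover have "t \<in> towers p" using t(1) colored_subset_towers by blast
  ultimately show "u \<in> colored (resize p a i j)" using colored_resize_iff by simp
qed

end

section \<open>Elevated Dyck paths\<close>

lemma height_Nil [simp]: "height [] = 0"
  and height_Cons [simp]: "height (x # xs) = (if x then 1 else -1) + height xs"
  and height_append [simp]: "height (xs @ ys) = height xs + height ys"
  unfolding height_def by simp_all

lemma height_replicate [simp]: "height (replicate n b) = (if b then int n else - int n)"
  by (induction n) auto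

lemma elevated_iff: "elevated p \<longleftrightarrow> 2 \<le> length p \<and> height p = 0 \<and>
   (\<forall>k. 0 < k \<and> k < length p \<longrightarrow> 0 < height (take k p))"
proof
  assume "elevated p"
  then obtain q where q: "dyck q" "p = True # q @ [False]" unfolding elevated_def by auto
  have "0 < height (take k p)" if k: "0 < k" "k < length p" for k
  proof -
    obtain d where d: "k = Suc d" "d \<le> length q" using k q(2) by (cases k) auto
    then have "take k p = True # take d q" using q(2) by simp
    moreover have "0 \<le> height (take d q)" using q(1) d unfolding dyck_def by auto
    ultimately show ?thesis by simp
  qed
  then show "2 \<le> length p \<and> height p = 0 \<and> (\<forall>k. 0 < k \<and> k < length p \<longrightarrow> 0 < height (take k p))"
    using q unfolding dyck_def by auto
next
  assume h: "2 \<le> length p \<and> height p = 0 \<and> (\<forall>k. 0 < k \<and> k < length p \<longrightarrow> 0 < height (take k p))"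
  then obtain x y q where p: "p = x # q @ [y]"
    by (metis le_add2 Suc_le_length_iff Suc_1 add_2_eq_Suc' append_butlast_last_id
        list.size(3) not_one_le_zero numeral_le_one_iff semiring_norm(69))
  have pos: "0 < height (take (Suc k) p)" if "k \<le> length q" for k
  proof -
    have "0 < Suc k \<and> Suc k < length p" using p that by simp
    then show ?thesis using h by blast
  qed
  have take_p: "take (Suc k) p = x # take k q" if "k \<le> length q" for k
    using p that by simp
  have x: "x" using pos[of 0] take_p[of 0] by (simp split: if_splits)
  have y: "\<not> y" using pos[of "length q"] take_p[of "length q"] h p by (simp split: if_splits)
  have "dyck q"
  proof -
    have "0 \<le> height (take k q)" if "k \<le> length q" for k
      using pos[OF that] take_p[OF that] x by simp
    moreover have "height q = 0" using h p x y by simp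
    ultimately show ?thesis unfolding dyck_def by blast
  qed
  then show "elevated p" unfolding elevated_def using p x y by auto
qed

lemma height_take_tower_pos:
  assumes "0 < d" "d < 2*j"
  shows "0 < height (take d (replicate j True @ replicate j False))"
proof -
  have "take d (replicate j True @ replicate j False) = replicate (min d j) True @ replicate (d - j) False"
    using assms by (simp add: take_append min_def)
  then show ?thesis using assms by (auto simp: min_def)
qed

lemma elevated_replace_tower:
  fixes A B :: path
  defines "T \<equiv> \<lambda>k. replicate k True @ replicate k False"
  assumes el: "elevated (A @ T i @ B)" and i: "1 \<le> i" and j: "1 \<le> j"
  shows "elevated (A @ T j @ B)"
proof -
  let ?p = "A @ T i @ B" and ?q = "A @ T j @ B"
  have E: "0 < height (take k ?p)" if "0 < k" "k < length ?p" for k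
    using el that unfolding elevated_iff by blast
  have hA: "0 \<le> height A"
  proof (cases "A = []")
    case False
    then have "0 < height (take (length A) ?p)" using E[of "length A"] i by (simp add: T_def)
    then show ?thesis by simp
  qed simp
  have "0 < height (take k ?q)" if k: "0 < k" "k < length ?q" for k
  proof -
    consider "k \<le> length A" | "length A < k" "k < length A + 2*j" | "length A + 2*j \<le> k" by linarith
    then show ?thesis
    proof cases
      case 1
      then show ?thesis using E[of k] k i by (simp add: T_def)
    next
      case 2
      then have "take k ?q = A @ take (k - length A) (T j)" by (simp add: T_def)
      then show ?thesis using height_take_tower_pos[of "k - length A" j] hA 2 by (simp add: T_def)
    next
      case 3
      define d where "d = k - length A - 2*j"
      have "k = length A + 2*j + d" using 3 unfolding d_def by simp
      then have "take k ?q = A @ T j @ take d B" "take (length A + 2*i + d) ?p = A @ T i @ take d B"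
        by (simp_all add: T_def)
      moreover have "0 < height (take (length A + 2*i + d) ?p)"
        using E[of "length A + 2*i + d"] k 3 i unfolding d_def by (simp add: T_def)
      ultimately show ?thesis by (simp add: T_def)
    qed
  qed
  moreover have "height ?q = 0" "2 \<le> length ?q" using el j unfolding elevated_iff by (auto simp: T_def)
  ultimately show ?thesis unfolding elevated_iff by blast
qed

lemma resize_in_Dn:
  assumes p: "p \<in> Dn n" and a: "(a, i) \<in> towers p" and j: "1 \<le> j"
  shows "resize p a i j \<in> Dn (n + int j - int i)"
proof -
  have i: "1 \<le> i" and l: "a + 2*i \<le> length p" using towersD[OF a] by auto
  have "p = take a p @ (replicate i True @ replicate i False) @ drop (a + 2*i) p"
    using resize_same[OF a] unfolding resize_def by simp
  then have "elevated (resize p a i j)"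
    using elevated_replace_tower[of "take a p" i "drop (a + 2*i) p" j] p i j
    unfolding resize_def Dn_def by simp
  then show ?thesis using p length_resize[OF l] l j unfolding Dn_def by auto
qed

section \<open>Leftmost and rightmost towers\<close>

lemma arg_min_on_eqI:
  fixes f :: "'a \<Rightarrow> 'b::linorder"
  assumes "x \<in> S" "\<And>y. y \<in> S \<Longrightarrow> y \<noteq> x \<Longrightarrow> f x < f y"
  shows "arg_min_on f S = x"
  unfolding arg_min_on_def
  by (rule arg_minI[of _ x]) (use assms in \<open>force simp: not_less le_less\<close>)+

lemma arg_max_on_eqI:
  fixes f :: "'a \<Rightarrow> 'b::linorder"
  assumes "x \<in> S" "\<And>y. y \<in> S \<Longrightarrow> y \<noteq> x \<Longrightarrow> f y < f x"
  shows "arg_max_on f S = x"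
  unfolding arg_max_on_def
  by (rule arg_maxI[of _ x]) (use assms in \<open>force simp: not_less le_less\<close>)+

lemma ex_strict_min_inj_on:
  fixes f :: "'a \<Rightarrow> 'b::linorder"
  assumes "finite S" "S \<noteq> {}" "inj_on f S"
  obtains x where "x \<in> S" "\<And>y. y \<in> S \<Longrightarrow> y \<noteq> x \<Longrightarrow> f x < f y"
proof -
  have "Min (f ` S) \<in> f ` S" using assms(1,2) by simp
  then obtain x where "x \<in> S" "f x = Min (f ` S)" by force
  then show thesis using that assms by (metis Min_le finite_imageI image_eqI inj_on_eq_iff order_le_neq_trans)
qed

lemma ex_strict_max_inj_on:
  fixes f :: "'a \<Rightarrow> 'b::linorder"
  assumes "finite S" "S \<noteq> {}" "inj_on f S"
  obtains x where "x \<in> S" "\<And>y. y \<in> S \<Longrightarrow> y \<noteq> x \<Longrightarrow> f y < f x"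
proof -
  have "Max (f ` S) \<in> f ` S" using assms(1,2) by simp
  then obtain x where "x \<in> S" "f x = Max (f ` S)" by force
  then show thesis using that assms by (metis Max_ge finite_imageI image_eqI inj_on_eq_iff order_le_neq_trans)
qed

lemma inj_on_fst_towers: "X \<subseteq> towers p \<Longrightarrow> inj_on fst X"
  using towers_fst_inj by (meson inj_onI subsetD)

lemma arg_min_on_fst_towers:
  assumes "X \<subseteq> towers p" "X \<noteq> {}"
  shows "arg_min_on fst X \<in> X" "\<And>u. u \<in> X \<Longrightarrow> u \<noteq> arg_min_on fst X \<Longrightarrow> fst (arg_min_on fst X) < fst u"
proof -
  obtain t where "t \<in> X" "\<And>u. u \<in> X \<Longrightarrow> u \<noteq> t \<Longrightarrow> fst t < fst u"
    using ex_strict_min_inj_on[OF rev_finite_subset[OF finite_towers assms(1)] assms(2)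
        inj_on_fst_towers[OF assms(1)]] by blast
  moreover from this have "arg_min_on fst X = t" by (rule arg_min_on_eqI)
  ultimately show "arg_min_on fst X \<in> X"
    "\<And>u. u \<in> X \<Longrightarrow> u \<noteq> arg_min_on fst X \<Longrightarrow> fst (arg_min_on fst X) < fst u" by simp_all
qed

lemma arg_max_on_fst_towers:
  assumes "X \<subseteq> towers p" "X \<noteq> {}"
  shows "arg_max_on fst X \<in> X" "\<And>u. u \<in> X \<Longrightarrow> u \<noteq> arg_max_on fst X \<Longrightarrow> fst u < fst (arg_max_on fst X)"
proof -
  obtain t where "t \<in> X" "\<And>u. u \<in> X \<Longrightarrow> u \<noteq> t \<Longrightarrow> fst u < fst t"
    using ex_strict_max_inj_on[OF rev_finite_subset[OF finite_towers assms(1)] assms(2)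
        inj_on_fst_towers[OF assms(1)]] by blast
  moreover from this have "arg_max_on fst X = t" by (rule arg_max_on_eqI)
  ultimately show "arg_max_on fst X \<in> X"
    "\<And>u. u \<in> X \<Longrightarrow> u \<noteq> arg_max_on fst X \<Longrightarrow> fst u < fst (arg_max_on fst X)" by simp_all
qed

section \<open>Configurations\<close>

type_synonym config = "path \<times> (nat \<times> nat) set \<times> (nat \<times> nat) set \<times> (nat \<times> nat) set"

text \<open>The configurations (p, S, R, Q) of the proof idea with m = |S|, r = |R|, k = |Q|; the two
  families of the theorem are the cases k = 0 and r = 0.\<close>
definition TsBwTw :: "nat \<Rightarrow> nat \<Rightarrow> nat \<Rightarrow> int \<Rightarrow> config set" where
  "TsBwTw m r k n = {(p, S, R, Q). p \<in> Dn n \<and> S \<subseteq> colored p \<and> card S = m \<and>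
     R \<subseteq> S \<inter> colored2 p \<and> card R = r \<and> Q \<subseteq> S \<and> card Q = k \<and>
     R \<inter> Q = {} \<and> (\<forall>t \<in> R. \<forall>q \<in> Q. fst q < fst t)}"

definition resize_config :: "nat \<Rightarrow> nat \<Rightarrow> nat \<Rightarrow> config \<Rightarrow> config" where
  "resize_config a i j x = (case x of (p, S, R, Q) \<Rightarrow>
     (resize p a i j, shift_tower a i j ` S, shift_tower a i j ` R, shift_tower a i j ` Q))"

lemma resize_config_inverse:
  assumes a: "(a, i) \<in> towers p" and j: "1 \<le> j" and "S \<subseteq> towers p" "R \<subseteq> towers p" "Q \<subseteq> towers p"
  shows "resize_config a j i (resize_config a i j (p, S, R, Q)) = (p, S, R, Q)"
proof -
  have "shift_tower a j i ` shift_tower a i j ` X = X" if "X \<subseteq> towers p" for X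
    using shift_tower_inverse[OF a j] that by (force simp: image_image)
  moreover have "resize (resize p a i j) a j i = p"
    using resize_resize resize_same[OF a] towersD(2)[OF a] by metis
  ultimately show ?thesis using assms by (simp add: resize_config_def)
qed

lemma resize_config_relabel_inverse:
  assumes a: "(a, i) \<in> towers p" and j: "1 \<le> j" and S: "S \<subseteq> towers p"
    and X: "X \<subseteq> S" "(a, i) \<in> X" and Y: "Y \<subseteq> S" "(a, i) \<notin> Y"
  defines "h \<equiv> shift_tower a i j"
  shows "resize_config a j i
           (resize p a i j, h ` S, insert (a, j) (h ` (X - {(a, i)})), h ` insert (a, i) Y - {(a, j)})
         = (p, S, X, Y)"
    and "resize_config a j i
           (resize p a i j, h ` S, h ` insert (a, i) Y - {(a, j)}, insert (a, j) (h ` (X - {(a, i)})))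
         = (p, S, Y, X)"
proof -
  have h_ai: "h (a, i) = (a, j)" unfolding h_def by (simp add: shift_tower_def shift_pos_def)
  have "insert (a, j) (h ` (X - {(a, i)})) = h ` X"
    using X(2) h_ai by (metis image_insert insert_Diff)
  moreover have "h ` insert (a, i) Y - {(a, j)} = h ` Y"
  proof -
    have "h (a, i) \<notin> h ` Y"
      using inj_on_image_mem_iff[OF inj_on_shift_tower[OF a j] a] Y S unfolding h_def by blast
    then show ?thesis using h_ai by auto
  qed
  moreover have "resize_config a j i (resize p a i j, h ` S, h ` A, h ` B) = (p, S, A, B)"
    if "A \<subseteq> S" "B \<subseteq> S" for A B
    using resize_config_inverse[OF a j S] that S unfolding h_def resize_config_def by auto
  ultimately show "resize_config a j i
           (resize p a i j, h ` S, insert (a, j) (h ` (X - {(a, i)})), h ` insert (a, i) Y - {(a, j)})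
         = (p, S, X, Y)"
    and "resize_config a j i
           (resize p a i j, h ` S, h ` insert (a, i) Y - {(a, j)}, insert (a, j) (h ` (X - {(a, i)})))
         = (p, S, Y, X)"
    using X(1) Y(1) by simp_all
qed

lemma resize_config_in_TsBwTw:
  assumes a: "(a, i) \<in> towers p" and j: "1 \<le> j" and p: "p \<in> Dn n"
    and S: "S \<subseteq> colored p" "card S = m"
    and R: "R \<subseteq> S" "card R = r" "R \<subseteq> colored2 p \<union> {(a, i)}" "(a, i) \<in> R \<Longrightarrow> 2 \<le> j"
    and Q: "Q \<subseteq> S" "card Q = k"
    and RQ: "R \<inter> Q = {}" "\<forall>t \<in> R. \<forall>q \<in> Q. fst q < fst t"
  shows "resize_config a i j (p, S, R, Q) \<in> TsBwTw m r k (n + int j - int i)"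
proof -
  let ?h = "shift_tower a i j" and ?p' = "resize p a i j"
  have ST: "S \<subseteq> towers p" using S colored_subset_towers by blast
  have inj: "inj_on ?h S" using inj_on_subset[OF inj_on_shift_tower[OF a j] ST] .
  have card: "card (?h ` X) = card X" if "X \<subseteq> S" for X
    using card_image[OF inj_on_subset[OF inj that]] .
  have "?h t \<in> colored2 ?p'" if t: "t \<in> R" for t
  proof -
    have "?h t \<in> colored ?p'" using t R(1) S(1) colored_resize[OF a j] by blast
    moreover have "2 \<le> snd (?h t)"
    proof (cases "fst t = a")
      case True
      then have "t = (a, i)" using towers_fst_inj[OF _ a] t R(1) ST by fastforce
      then show ?thesis using R(4) t by (simp add: shift_tower_def)
    next
      case False
      then have "t \<in> colored2 p" using R(3) t by auto
      then show ?thesis using False colored2_iff by (simp add: shift_tower_def)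
    qed
    ultimately show ?thesis using colored2_iff by blast
  qed
  moreover have "fst (?h q) < fst (?h t)" if "t \<in> R" "q \<in> Q" for t q
    using fst_shift_tower_less[OF a j] RQ(2) that R(1) Q(1) ST by blast
  moreover have "?h ` R \<inter> ?h ` Q = {}"
    using inj_on_image_Int[OF inj R(1) Q(1)] RQ(1) by simp
  moreover have "?h ` S \<subseteq> colored ?p'" using S(1) colored_resize[OF a j] by blast
  ultimately show ?thesis
    using resize_in_Dn[OF p a j] card R Q S unfolding TsBwTw_def resize_config_def by auto
qed

definition shrink_leftmost_bottom :: "config \<Rightarrow> config" where
  "shrink_leftmost_bottom x = (case x of (p, S, R, Q) \<Rightarrow> let t = arg_min_on fst R in
     resize_config (fst t) (snd t) (snd t - 1) (p, S, R - {t}, insert t Q))"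

definition grow_rightmost_tower :: "config \<Rightarrow> config" where
  "grow_rightmost_tower x = (case x of (p, S, R, Q) \<Rightarrow> let t = arg_max_on fst Q in
     resize_config (fst t) (snd t) (snd t + 1) (p, S, insert t R, Q - {t}))"

lemma TsBwTw_leftmost_bottom:
  assumes "(p, S, R, Q) \<in> TsBwTw m (Suc r) k n"
  obtains a i where "arg_min_on fst R = (a, i)" "(a, i) \<in> R" "(a, i) \<in> towers p" "2 \<le> i"
    and "\<And>u. u \<in> R \<Longrightarrow> u \<noteq> (a, i) \<Longrightarrow> a < fst u"
proof -
  have R: "R \<subseteq> colored2 p" "R \<subseteq> towers p" "R \<noteq> {}"
    using assms colored_subset_towers unfolding TsBwTw_def by auto
  note leftmost = arg_min_on_fst_towers[OF R(2,3)]
  obtain a i where t: "arg_min_on fst R = (a, i)" by force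
  show thesis
  proof (rule that[OF t])
    show "(a, i) \<in> R" "(a, i) \<in> towers p" "2 \<le> i" using leftmost(1) t R colored2_iff by auto
    show "a < fst u" if "u \<in> R" "u \<noteq> (a, i)" for u using leftmost(2)[OF that[folded t]] t by simp
  qed
qed

lemma TsBwTw_rightmost_tower:
  assumes "(p, S, R, Q) \<in> TsBwTw m r (Suc k) n"
  obtains a j where "arg_max_on fst Q = (a, j)" "(a, j) \<in> Q" "(a, j) \<in> towers p"
    and "\<And>u. u \<in> Q \<Longrightarrow> u \<noteq> (a, j) \<Longrightarrow> fst u < a"
proof -
  from assms have "Q \<subseteq> S" "S \<subseteq> colored p" "card Q = Suc k" unfolding TsBwTw_def by simp_all
  then have Q: "Q \<subseteq> towers p" "Q \<noteq> {}" using colored_subset_towers by fastforce+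
  note rightmost = arg_max_on_fst_towers[OF Q]
  obtain a j where t: "arg_max_on fst Q = (a, j)" by force
  show thesis
  proof (rule that[OF t])
    show "(a, j) \<in> Q" "(a, j) \<in> towers p" using rightmost(1) t Q by auto
    show "fst u < a" if "u \<in> Q" "u \<noteq> (a, j)" for u using rightmost(2)[OF that[folded t]] t by simp
  qed
qed

lemma shrink_leftmost_bottom_in_TsBwTw:
  assumes x: "(p, S, R, Q) \<in> TsBwTw m (Suc r) k n"
  shows "shrink_leftmost_bottom (p, S, R, Q) \<in> TsBwTw m r (Suc k) (n - 1)"
proof -
  from x have p: "p \<in> Dn n" and S: "S \<subseteq> colored p" "card S = m"
    and R: "R \<subseteq> S" "R \<subseteq> colored2 p" "card R = Suc r" and Q: "Q \<subseteq> S" "card Q = k"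
    and RQ: "R \<inter> Q = {}" "\<forall>t \<in> R. \<forall>q \<in> Q. fst q < fst t"
    unfolding TsBwTw_def by simp_all
  obtain a i where t: "arg_min_on fst R = (a, i)" and "(a, i) \<in> R" and a: "(a, i) \<in> towers p"
    and "2 \<le> i" and min: "\<And>u. u \<in> R \<Longrightarrow> u \<noteq> (a, i) \<Longrightarrow> a < fst u"
    using TsBwTw_leftmost_bottom[OF x] by blast
  have j: "1 \<le> i - 1" using \<open>2 \<le> i\<close> by simp
  have "finite Q" using Q(1) S(1) finite_colored rev_finite_subset by blast
  have "resize_config a i (i - 1) (p, S, R - {(a, i)}, insert (a, i) Q)
      \<in> TsBwTw m r (Suc k) (n + int (i - 1) - int i)"
  proof (rule resize_config_in_TsBwTw[OF a j p S])
    show "R - {(a, i)} \<subseteq> S" "R - {(a, i)} \<subseteq> colored2 p \<union> {(a, i)}" using R(1,2) by blast+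
    show "card (R - {(a, i)}) = r" using R(3) \<open>(a, i) \<in> R\<close> by simp
    show "(a, i) \<in> R - {(a, i)} \<Longrightarrow> 2 \<le> i - 1" by simp
    show "insert (a, i) Q \<subseteq> S" using \<open>(a, i) \<in> R\<close> R(1) Q(1) by blast
    have "(a, i) \<notin> Q" using \<open>(a, i) \<in> R\<close> RQ(1) by blast
    then show "card (insert (a, i) Q) = Suc k" using Q(2) \<open>finite Q\<close> by simp
    show "(R - {(a, i)}) \<inter> insert (a, i) Q = {}" using RQ(1) by blast
    show "\<forall>u \<in> R - {(a, i)}. \<forall>q \<in> insert (a, i) Q. fst q < fst u"
      using min RQ(2) \<open>(a, i) \<in> R\<close> by fastforce
  qed
  then show ?thesis
    using \<open>2 \<le> i\<close> by (simp add: shrink_leftmost_bottom_def t Let_def of_nat_diff)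
qed

lemma grow_shrink_leftmost_bottom:
  assumes x: "(p, S, R, Q) \<in> TsBwTw m (Suc r) k n"
  shows "grow_rightmost_tower (shrink_leftmost_bottom (p, S, R, Q)) = (p, S, R, Q)"
proof -
  from x have ST: "S \<subseteq> towers p" and R: "R \<subseteq> S" and Q: "Q \<subseteq> S"
    and RQ: "R \<inter> Q = {}" "\<forall>t \<in> R. \<forall>q \<in> Q. fst q < fst t"
    using colored_subset_towers unfolding TsBwTw_def by auto
  obtain a i where t: "arg_min_on fst R = (a, i)" and "(a, i) \<in> R" and a: "(a, i) \<in> towers p"
    and "2 \<le> i"
    using TsBwTw_leftmost_bottom[OF x] by blast
  have j: "1 \<le> i - 1" using \<open>2 \<le> i\<close> by simp
  let ?h = "shift_tower a i (i - 1)"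
  have "arg_max_on fst (?h ` insert (a, i) Q) = (a, i - 1)"
  proof (rule arg_max_on_eqI)
    show "(a, i - 1) \<in> ?h ` insert (a, i) Q" by (force simp: shift_tower_def shift_pos_def)
    fix u assume "u \<in> ?h ` insert (a, i) Q" "u \<noteq> (a, i - 1)"
    then obtain q where "q \<in> Q" "u = ?h q" by (auto simp: shift_tower_def shift_pos_def)
    moreover have "fst q < a" if "q \<in> Q" for q using RQ(2) \<open>(a, i) \<in> R\<close> that by force
    ultimately show "fst u < fst (a, i - 1)"
      using fst_shift_tower_less[OF a j a, of q] Q ST by (auto simp: shift_tower_def shift_pos_def)
  qed
  moreover have "(a, i) \<notin> Q" using \<open>(a, i) \<in> R\<close> RQ(1) by blast
  ultimately show ?thesis
    using resize_config_relabel_inverse(1)[OF a j ST R \<open>(a, i) \<in> R\<close> Q] \<open>2 \<le> i\<close>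
    by (simp add: shrink_leftmost_bottom_def grow_rightmost_tower_def t resize_config_def Let_def)
qed

lemma grow_rightmost_tower_in_TsBwTw:
  assumes x: "(p, S, R, Q) \<in> TsBwTw m r (Suc k) n"
  shows "grow_rightmost_tower (p, S, R, Q) \<in> TsBwTw m (Suc r) k (n + 1)"
proof -
  from x have p: "p \<in> Dn n" and S: "S \<subseteq> colored p" "card S = m"
    and R: "R \<subseteq> S" "R \<subseteq> colored2 p" "card R = r" and Q: "Q \<subseteq> S" "card Q = Suc k"
    and RQ: "R \<inter> Q = {}" "\<forall>t \<in> R. \<forall>q \<in> Q. fst q < fst t"
    unfolding TsBwTw_def by simp_all
  obtain a j where t: "arg_max_on fst Q = (a, j)" and "(a, j) \<in> Q" and a: "(a, j) \<in> towers p"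
    and max: "\<And>u. u \<in> Q \<Longrightarrow> u \<noteq> (a, j) \<Longrightarrow> fst u < a"
    using TsBwTw_rightmost_tower[OF x] by blast
  have j: "1 \<le> j + 1" by simp
  have "finite R" using R(1) S(1) finite_colored rev_finite_subset by blast
  have "resize_config a j (j + 1) (p, S, insert (a, j) R, Q - {(a, j)})
      \<in> TsBwTw m (Suc r) k (n + int (j + 1) - int j)"
  proof (rule resize_config_in_TsBwTw[OF a j p S])
    show "insert (a, j) R \<subseteq> S" using \<open>(a, j) \<in> Q\<close> R(1) Q(1) by blast
    have "(a, j) \<notin> R" using \<open>(a, j) \<in> Q\<close> RQ(1) by blast
    then show "card (insert (a, j) R) = Suc r" using R(3) \<open>finite R\<close> by simp
    show "insert (a, j) R \<subseteq> colored2 p \<union> {(a, j)}" using R(2) by blast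
    show "(a, j) \<in> insert (a, j) R \<Longrightarrow> 2 \<le> j + 1" using towersD(1)[OF a] by simp
    show "Q - {(a, j)} \<subseteq> S" using Q(1) by blast
    show "card (Q - {(a, j)}) = k" using Q(2) \<open>(a, j) \<in> Q\<close> by simp
    show "insert (a, j) R \<inter> (Q - {(a, j)}) = {}" using RQ(1) by blast
    show "\<forall>u \<in> insert (a, j) R. \<forall>q \<in> Q - {(a, j)}. fst q < fst u"
      using max RQ(2) by fastforce
  qed
  then show ?thesis by (simp add: grow_rightmost_tower_def t Let_def)
qed

lemma shrink_grow_rightmost_tower:
  assumes x: "(p, S, R, Q) \<in> TsBwTw m r (Suc k) n"
  shows "shrink_leftmost_bottom (grow_rightmost_tower (p, S, R, Q)) = (p, S, R, Q)"
proof -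
  from x have ST: "S \<subseteq> towers p" and R: "R \<subseteq> S" and Q: "Q \<subseteq> S"
    and RQ: "R \<inter> Q = {}" "\<forall>t \<in> R. \<forall>q \<in> Q. fst q < fst t"
    using colored_subset_towers unfolding TsBwTw_def by auto
  obtain a j where t: "arg_max_on fst Q = (a, j)" and "(a, j) \<in> Q" and a: "(a, j) \<in> towers p"
    using TsBwTw_rightmost_tower[OF x] by blast
  have j: "1 \<le> j + 1" by simp
  let ?h = "shift_tower a j (j + 1)"
  have "arg_min_on fst (?h ` insert (a, j) R) = (a, j + 1)"
  proof (rule arg_min_on_eqI)
    show "(a, j + 1) \<in> ?h ` insert (a, j) R" by (force simp: shift_tower_def shift_pos_def)
    fix u assume "u \<in> ?h ` insert (a, j) R" "u \<noteq> (a, j + 1)"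
    then obtain r where "r \<in> R" "u = ?h r" by (auto simp: shift_tower_def shift_pos_def)
    moreover have "a < fst r" if "r \<in> R" for r using RQ(2) \<open>(a, j) \<in> Q\<close> that by force
    ultimately show "fst (a, j + 1) < fst u"
      using fst_shift_tower_less[OF a j _ a, of r] R ST by (auto simp: shift_tower_def shift_pos_def)
  qed
  moreover have "(a, j) \<notin> R" using \<open>(a, j) \<in> Q\<close> RQ(1) by blast
  ultimately show ?thesis
    using resize_config_relabel_inverse(2)[OF a j ST Q \<open>(a, j) \<in> Q\<close> R]
    by (simp add: shrink_leftmost_bottom_def grow_rightmost_tower_def t resize_config_def Let_def)
qed

lemma bij_betw_shrink_leftmost_bottom:
  "bij_betw shrink_leftmost_bottom (TsBwTw m (Suc r) k n) (TsBwTw m r (Suc k) (n - 1))"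
proof (rule bij_betw_byWitness[where f' = grow_rightmost_tower])
  show "\<forall>x \<in> TsBwTw m (Suc r) k n. grow_rightmost_tower (shrink_leftmost_bottom x) = x"
    "shrink_leftmost_bottom ` TsBwTw m (Suc r) k n \<subseteq> TsBwTw m r (Suc k) (n - 1)"
    using shrink_leftmost_bottom_in_TsBwTw grow_shrink_leftmost_bottom by auto
  show "\<forall>y \<in> TsBwTw m r (Suc k) (n - 1). shrink_leftmost_bottom (grow_rightmost_tower y) = y"
    "grow_rightmost_tower ` TsBwTw m r (Suc k) (n - 1) \<subseteq> TsBwTw m (Suc r) k n"
    using grow_rightmost_tower_in_TsBwTw[where n = "n - 1"] shrink_grow_rightmost_tower by auto
qed

lemma ex_bij_betw_TsBwTw:
  "\<exists>f. bij_betw f (TsBwTw m r k n) (TsBwTw m 0 (k + r) (n - int r))"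
proof (induction r arbitrary: k n)
  case 0
  show ?case using bij_betw_id by auto
next
  case (Suc r)
  then obtain g where "bij_betw g (TsBwTw m r (Suc k) (n - 1)) (TsBwTw m 0 (Suc k + r) (n - 1 - int r))"
    by blast
  then have "bij_betw (g \<circ> shrink_leftmost_bottom) (TsBwTw m (Suc r) k n)
      (TsBwTw m 0 (Suc k + r) (n - 1 - int r))"
    using bij_betw_trans[OF bij_betw_shrink_leftmost_bottom] by blast
  moreover have "Suc k + r = k + Suc r" "n - 1 - int r = n - int (Suc r)" by simp_all
  ultimately show ?case by metis
qed

lemma card_0_subset_colored: "card X = 0 \<Longrightarrow> X \<subseteq> S \<Longrightarrow> S \<subseteq> colored p \<Longrightarrow> X = {}"
  using rev_finite_subset[OF finite_colored, of X p] by auto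

lemma bij_betw_TsBw_TsBwTw: "bij_betw (\<lambda>(p, S, R). (p, S, R, {})) (TsBw m r n) (TsBwTw m r 0 n)"
  by (rule bij_betw_byWitness[where f' = "\<lambda>(p, S, R, Q). (p, S, R)"])
    (auto simp: TsBw_def TsBwTw_def dest: card_0_subset_colored)

lemma bij_betw_TsBwTw_TsTw: "bij_betw (\<lambda>(p, S, R, Q). (p, S, Q)) (TsBwTw m 0 k n) (TsTw m k n)"
  by (rule bij_betw_byWitness[where f' = "\<lambda>(p, S, Q). (p, S, {}, Q)"])
    (auto simp: TsTw_def TsBwTw_def dest: card_0_subset_colored)

theorem lemma2p2:
  fixes n m r :: nat
  shows "\<exists>f. bij_betw f (TsBw m r (int n)) (TsTw m r (int n - int r))"
proof -
  obtain g where "bij_betw g (TsBwTw m r 0 (int n)) (TsBwTw m 0 r (int n - int r))"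
    using ex_bij_betw_TsBwTw[of m r 0 "int n"] by auto
  then show ?thesis
    using bij_betw_trans[OF bij_betw_TsBw_TsBwTw bij_betw_trans[OF _ bij_betw_TsBwTw_TsTw]] by blast
qed

end
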